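(* Let $n\ge 1$ and $m\ge 2$ be integers with $m\nmid n$, let $\ell=\lfloor n/m\rfloor$, and let $f=\theta_{m,0}+\sum_{i=1}^{\ell}a_i\theta_{m,i}$ with $a_i\in\mathbb{F}_2$. Then the compositional inverse of $f$ is $f^{-1}=\theta_{m,0}+\sum_{j=1}^{\ell}b_j\theta_{m,j}$, where $b_1=a_1$ and, for $j\in\{2,3,\dots,\ell\}$, $b_j=a_j+\sum_{u+v=j,\ u,v\in\{1,\dots,j-1\}}a_ub_v$. Furthermore, $f$ is an involution (i.e. $f\circ f$ is the identity) if and only if $a_i=0$ for every $i\in\{1,2,\dots,\lfloor \ell/2\rfloor\}$.
   Context: For $x=(x_0,\dots,x_{n-1})\in\mathbb{F}_2^n$, indices of coordinates are taken modulo $n$. For a nonnegative integer $k$, the map $\theta_{m,k}\colon\mathbb{F}_2^n\to\mathbb{F}_2^n$ is defined by $\theta_{m,k}(x)=y$ with $y_i=x_{i+mk}\prod_{1\le j\le mk-1,\ m\nmid j}(x_{i+j}+1)$ for $i\in\{0,\dots,n-1\}$; $\theta_{m,0}$ is the identity map. Sums of maps are pointwise sums over $\mathbb{F}_2^n$; arithmetic on the coefficients is in $\mathbb{F}_2$. *)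

theory Defs
  imports "HOL-Library.Z2"
begin

text \<open>Vectors of F_2^n are represented as functions nat => bit; only the
coordinates 0..n-1 are meaningful, indices are reduced mod n.\<close>

definition vecs :: "nat \<Rightarrow> (nat \<Rightarrow> bit) set" where
  "vecs n = {x. \<forall>i\<ge>n. x i = 0}"

definition theta :: "nat \<Rightarrow> nat \<Rightarrow> nat \<Rightarrow> (nat \<Rightarrow> bit) \<Rightarrow> (nat \<Rightarrow> bit)" where
  "theta n m k x = (\<lambda>i. if i < n then
      x ((i + m * k) mod n) * (\<Prod>j\<in>{j. 1 \<le> j \<and> j \<le> m * k - 1 \<and> \<not> m dvd j}. x ((i + j) mod n) + 1)
    else 0)"

definition theta_comb :: "nat \<Rightarrow> nat \<Rightarrow> nat \<Rightarrow> (nat \<Rightarrow> bit) \<Rightarrow> (nat \<Rightarrow> bit) \<Rightarrow> (nat \<Rightarrow> bit)" where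
  "theta_comb n m l c x = (\<lambda>i. theta n m 0 x i + (\<Sum>k=1..l. c k * theta n m k x i))"

end

theory Submission
  imports Defs "HOL-Library.Disjoint_Sets"
begin

(* Extend x to the n-periodic infinite word X q = x (q mod n). Then theta_{m,k} x reads off
   the pattern theta_word m k X at p: a 1 at p + m k and 0 at every gap p + j, 0 < j < m k,
   m not dividing j. Two such patterns starting less than m apart cannot both occur, and
   this gives theta_{m,i} o f = sum_j a_j theta_{m,i+j} (a_0 = 1): the theta_{m,k} compose
   like the powers t^k, with f corresponding to the series 1 + sum_k a_k t^k. For m not
   dividing n, theta_{m,k} vanishes on n-periodic words once k > l (the position
   p + m k - n is a gap carrying the same bit as p + m k), so composition is multiplication
   of series modulo t^(l+1). Hence the map with coefficients b inverts f iff the product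
   of the two series is 1 up to degree l, which is what the recursion for b says; and
   f o f = id iff
   (1 + A(t))^2 = 1 + A(t^2) is 1 up to degree l, i.e. a_i = 0 whenever 2 i <= l. *)

(* Keep + and * on bit as field operations instead of rewriting them to xor/and. *)
declare mult_bit_eq_and [simp del] add_bit_eq_xor [simp del]

definition conv :: "(nat \<Rightarrow> 'a::comm_semiring_1) \<Rightarrow> (nat \<Rightarrow> 'a) \<Rightarrow> nat \<Rightarrow> 'a" where
  "conv c d s = (\<Sum>k\<le>s. c k * d (s - k))"

lemma conv_commute: "conv c d = conv d c"
proof
  fix s
  show "conv c d s = conv d c s"
    unfolding conv_def
    by (rule sum.reindex_bij_witness[of _ "\<lambda>k. s - k" "\<lambda>k. s - k"]) (auto simp: mult.commute)
qed

lemma conv_fun_upd_0: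
  assumes "1 \<le> s"
  shows "conv (c(0 := 1)) (d(0 := 1)) s = c s + d s + (\<Sum>k=1..s-1. c k * d (s - k))"
proof -
  have "{..s} = insert 0 (insert s {1..s-1})"
    using assms by auto
  moreover have "(\<Sum>k=1..s-1. (c(0 := 1)) k * (d(0 := 1)) (s - k)) = (\<Sum>k=1..s-1. c k * d (s - k))"
    by (intro sum.cong) auto
  ultimately show ?thesis
    using assms by (simp add: conv_def add_ac)
qed

lemma conv_self_bit: "conv c c s = (if even s then c (s div 2) else 0)" for c :: "nat \<Rightarrow> bit"
proof -
  let ?f = "\<lambda>k. c k * c (s - k)"
  have "(\<Sum>k\<in>{..s} - {k. 2 * k = s}. ?f k) = 0"
    by (rule sum_involution_eq_0[where h = "\<lambda>k. s - k"]) (auto simp: mult.commute)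
  moreover have "{..s} \<inter> {k. 2 * k = s} = (if even s then {s div 2} else {})"
    by auto
  ultimately show ?thesis
    unfolding conv_def sum.Int_Diff[OF finite_atMost, where B = "{k. 2 * k = s}"]
    by (auto simp: mult_2 [symmetric])
qed

lemma conv_self_fun_upd_0_eq_0_iff:
  fixes a :: "nat \<Rightarrow> bit"
  shows "(\<forall>s\<in>{1..L}. conv (a(0 := 1)) (a(0 := 1)) s = 0) \<longleftrightarrow> (\<forall>i\<in>{1..L div 2}. a i = 0)"
proof (intro iffI ballI)
  fix i
  assume conv: "\<forall>s\<in>{1..L}. conv (a(0 := 1)) (a(0 := 1)) s = 0" and i: "i \<in> {1..L div 2}"
  then have "conv (a(0 := 1)) (a(0 := 1)) (2 * i) = 0"
    by auto
  with i show "a i = 0"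
    by (simp add: conv_self_bit)
next
  fix s
  assume a: "\<forall>i\<in>{1..L div 2}. a i = 0" and s: "s \<in> {1..L}"
  show "conv (a(0 := 1)) (a(0 := 1)) s = 0"
  proof (cases "even s")
    case True
    with s have "s div 2 \<in> {1..L div 2}"
      by (auto elim!: evenE)
    with a True show ?thesis
      by (simp add: conv_self_bit)
  qed (simp add: conv_self_bit)
qed

definition gaps :: "nat \<Rightarrow> nat \<Rightarrow> nat set" where
  "gaps m k = {j. 1 \<le> j \<and> j \<le> m * k - 1 \<and> \<not> m dvd j}"

definition theta_word :: "nat \<Rightarrow> nat \<Rightarrow> (nat \<Rightarrow> bit) \<Rightarrow> nat \<Rightarrow> bit" where
  "theta_word m k X p = X (p + m * k) * (\<Prod>j\<in>gaps m k. X (p + j) + 1)"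

definition theta_sum :: "nat \<Rightarrow> nat \<Rightarrow> (nat \<Rightarrow> bit) \<Rightarrow> (nat \<Rightarrow> bit) \<Rightarrow> nat \<Rightarrow> bit" where
  "theta_sum m L c X p = (\<Sum>k\<le>L. c k * theta_word m k X p)"

lemma mem_gaps: "j \<in> gaps m k \<longleftrightarrow> 0 < j \<and> j < m * k \<and> \<not> m dvd j"
  unfolding gaps_def by auto

lemma finite_gaps [simp]: "finite (gaps m k)"
  by (rule finite_subset[of _ "{..<m * k}"]) (auto simp: mem_gaps)

lemma gaps_Suc:
  assumes "0 < m"
  shows "gaps m (Suc k) = {1..<m} \<union> (+) m ` gaps m k"
proof (intro set_eqI iffI)
  fix j
  assume j: "j \<in> gaps m (Suc k)"
  show "j \<in> {1..<m} \<union> (+) m ` gaps m k"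
  proof (cases "j < m")
    case False
    with j have "m < j"
      by (metis mem_gaps dvd_refl nat_neq_iff)
    with j have "j - m \<in> gaps m k"
      by (auto simp: mem_gaps dest: dvd_diffD)
    with \<open>m < j\<close> show ?thesis
      by (auto intro: image_eqI[of _ _ "j - m"])
  qed (use j in \<open>auto simp: mem_gaps\<close>)
qed (use assms in \<open>auto simp: mem_gaps dest: nat_dvd_not_less\<close>)

lemma theta_word_0 [simp]: "theta_word m 0 X p = X p"
  by (simp add: theta_word_def gaps_def)

lemma theta_word_Suc:
  assumes "0 < m"
  shows "theta_word m (Suc k) X p = (\<Prod>d\<in>{1..<m}. X (p + d) + 1) * theta_word m k X (p + m)"
proof -
  have "(\<Prod>j\<in>gaps m (Suc k). X (p + j) + 1)
      = (\<Prod>d\<in>{1..<m}. X (p + d) + 1) * (\<Prod>j\<in>(+) m ` gaps m k. X (p + j) + 1)"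
    unfolding gaps_Suc[OF assms] by (rule prod.union_disjoint) auto
  also have "(\<Prod>j\<in>(+) m ` gaps m k. X (p + j) + 1) = (\<Prod>j\<in>gaps m k. X (p + m + j) + 1)"
    by (simp add: prod.reindex add.assoc)
  finally show ?thesis
    by (simp add: theta_word_def algebra_simps)
qed

lemma theta_word_eq_1_iff:
  "theta_word m k X p = 1 \<longleftrightarrow> X (p + m * k) = 1 \<and> (\<forall>j\<in>gaps m k. X (p + j) = 0)"
proof -
  have "theta_word m k X p \<noteq> 0 \<longleftrightarrow> X (p + m * k) \<noteq> 0 \<and> (\<forall>j\<in>gaps m k. X (p + j) + 1 \<noteq> 0)"
    by (simp add: theta_word_def prod_zero_iff del: bit_not_zero_iff)
  then show ?thesis
    by simp
qed

(* The pattern at p + d either has the 1 at p + m (s + 1) on one of its gaps (k > s), or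
   its own 1 on a gap of the pattern at p + m (k <= s). *)
lemma theta_word_overlap_eq_0:
  assumes m: "0 < m" and nz: "theta_word m s X (p + m) = 1"
    and d: "0 < d" "d < m" and k: "0 < k"
  shows "theta_word m k X (p + d) = 0"
proof -
  from nz have one: "X (p + m * Suc s) = 1" and zero: "\<And>j. j \<in> gaps m s \<Longrightarrow> X (p + m + j) = 0"
    by (auto simp: theta_word_eq_1_iff add.assoc)
  have "\<not> m dvd d"
    using d by (auto dest: nat_dvd_not_less)
  show ?thesis
  proof (cases "s < k")
    case True
    define e where "e = m * Suc s - d"
    have "m * Suc s \<le> m * k"
      using True by (intro mult_le_mono2) simp
    moreover have "m \<le> m * Suc s"
      by simp
    moreover have "\<not> m dvd e"
      using \<open>\<not> m dvd d\<close> \<open>m \<le> m * Suc s\<close> d unfolding e_def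
      by (metis dvd_diff_nat dvd_triv_left diff_diff_cancel less_imp_le_nat order_less_le_trans)
    ultimately have "e \<in> gaps m k"
      using d unfolding e_def mem_gaps by linarith
    moreover have "X (p + d + e) = 1"
      using one \<open>m \<le> m * Suc s\<close> d unfolding e_def by simp
    ultimately show ?thesis
      unfolding bit_not_one_iff [symmetric] theta_word_eq_1_iff by force
  next
    case False
    define e where "e = m * (k - 1) + d"
    have "m * (k - 1) + m \<le> m * s"
      using False k by (metis Suc_diff_1 mult_Suc_right add.commute mult_le_mono2 not_less)
    moreover have "\<not> m dvd e"
      using \<open>\<not> m dvd d\<close> unfolding e_def by (simp add: dvd_add_right_iff)
    ultimately have "e \<in> gaps m s"
      using d unfolding e_def mem_gaps by linarith
    moreover have "p + d + m * k = p + m + e"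
      using k unfolding e_def by (cases k) simp_all
    ultimately have "X (p + d + m * k) = 0"
      using zero by (metis add.assoc)
    then show ?thesis
      unfolding bit_not_one_iff [symmetric] theta_word_eq_1_iff by simp
  qed
qed

lemma theta_sum_eq_self_if_overlap:
  assumes m: "0 < m" and c: "c 0 = 1" and nz: "theta_word m s X (p + m) = 1"
    and d: "0 < d" "d < m"
  shows "theta_sum m L c X (p + d) = X (p + d)"
proof -
  have "theta_sum m L c X (p + d) = (\<Sum>k\<in>{0}. c k * theta_word m k X (p + d))"
    unfolding theta_sum_def
    by (rule sum.mono_neutral_right) (auto simp: theta_word_overlap_eq_0[OF m nz d])
  then show ?thesis
    using c by simp
qed

lemma theta_word_theta_sum:
  assumes m: "0 < m" and c: "c 0 = 1"
  shows "theta_word m i (theta_sum m L c X) p = (\<Sum>j\<le>L. c j * theta_word m (i + j) X p)"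
proof (induction i arbitrary: p)
  case 0
  then show ?case
    by (simp add: theta_sum_def)
next
  case (Suc i)
  define S where "S = (\<Sum>j\<le>L. c j * theta_word m (i + j) X (p + m))"
  have "(\<Prod>d\<in>{1..<m}. theta_sum m L c X (p + d) + 1) * S = (\<Prod>d\<in>{1..<m}. X (p + d) + 1) * S"
  proof (cases "S = 0")
    case False
    then obtain j where "c j * theta_word m (i + j) X (p + m) \<noteq> 0"
      unfolding S_def by (meson sum.not_neutral_contains_not_neutral)
    then have "theta_word m (i + j) X (p + m) = 1"
      by auto
    then show ?thesis
      by (simp add: theta_sum_eq_self_if_overlap[of m c, OF m c])
  qed simp
  then show ?case
    unfolding theta_word_Suc[OF m] Suc S_def sum_distrib_left
    by (simp add: theta_word_Suc[OF m] mult_ac)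
qed

lemma theta_sum_theta_sum:
  assumes m: "0 < m" and a: "a 0 = 1"
    and vanish: "\<And>k. L < k \<Longrightarrow> theta_word m k X p = 0"
  shows "theta_sum m L b (theta_sum m L a X) p = theta_sum m L (conv b a) X p"
proof -
  define g where "g k j = b k * (a j * theta_word m (k + j) X p)" for k j
  have "theta_sum m L b (theta_sum m L a X) p = (\<Sum>k\<le>L. \<Sum>j\<le>L. g k j)"
    unfolding theta_sum_def[of m L b] theta_word_theta_sum[of m a, OF m a] g_def sum_distrib_left ..
  also have "\<dots> = (\<Sum>(k, j)\<in>{..L} \<times> {..L}. g k j)"
    by (rule sum.cartesian_product)
  also have "\<dots> = (\<Sum>(k, j)\<in>{(k, j). k + j \<le> L}. g k j)"
    by (rule sum.mono_neutral_right) (auto simp: g_def, metis not_le_imp_less vanish zero_neq_one)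
  also have "\<dots> = (\<Sum>s\<le>L. \<Sum>k\<le>s. g k (s - k))"
    by (rule sum.triangle_reindex_eq)
  also have "\<dots> = theta_sum m L (conv b a) X p"
    unfolding theta_sum_def conv_def sum_distrib_right g_def
    by (intro sum.cong refl) (simp add: mult_ac)
  finally show ?thesis .
qed

lemma theta_word_periodic_eq_0:
  assumes m: "0 < m" and periodic: "\<And>q. X (q + n) = X q"
    and ndvd: "\<not> m dvd n" and k: "n div m < k"
  shows "theta_word m k X p = 0"
proof -
  have "n < m * k"
    using k m by (metis div_less_iff_less_mult mult.commute)
  moreover have "0 < n"
    using ndvd by (rule contrapos_np) simp
  moreover have "\<not> m dvd m * k - n"
    using ndvd \<open>n < m * k\<close> by (metis dvd_diff_nat dvd_triv_left diff_diff_cancel less_imp_le_nat)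
  ultimately have gap: "m * k - n \<in> gaps m k"
    by (auto simp: mem_gaps)
  have "X (p + (m * k - n)) = X (p + m * k)"
    using periodic[of "p + (m * k - n)"] \<open>n < m * k\<close> by simp
  then show ?thesis
    using gap unfolding bit_not_one_iff [symmetric] theta_word_eq_1_iff by force
qed

lemma theta_word_mod:
  "theta_word m k (\<lambda>q. x (q mod n)) (p mod n) = theta_word m k (\<lambda>q. x (q mod n)) p"
  by (simp add: theta_word_def mod_add_left_eq)

lemma theta_comb_eq_theta_sum:
  "theta_comb n m L c x i = (if i < n then theta_sum m L (c(0 := 1)) (\<lambda>q. x (q mod n)) i else 0)"
proof -
  have "{..L} = insert 0 {1..L}"
    by auto
  then show ?thesis
    by (simp add: theta_comb_def theta_sum_def theta_def theta_word_def gaps_def)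
qed

lemma theta_comb_theta_comb:
  assumes m: "0 < m" and ndvd: "\<not> m dvd n"
  shows "theta_comb n m (n div m) c (theta_comb n m (n div m) d x) i
    = (if i < n then theta_sum m (n div m) (conv (c(0 := 1)) (d(0 := 1))) (\<lambda>q. x (q mod n)) i else 0)"
proof -
  have "0 < n"
    using ndvd by (rule contrapos_np) simp
  then have "(\<lambda>q. theta_comb n m L d x (q mod n)) = theta_sum m L (d(0 := 1)) (\<lambda>q. x (q mod n))" for L
    by (auto simp: theta_comb_eq_theta_sum theta_sum_def theta_word_mod)
  moreover have "theta_word m k (\<lambda>q. x (q mod n)) p = 0" if "n div m < k" for k p
    by (rule theta_word_periodic_eq_0[OF m _ ndvd that]) simp
  ultimately show ?thesis
    by (simp add: theta_comb_eq_theta_sum[of n m _ c] theta_sum_theta_sum[OF m])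
qed

lemma theta_word_indicator:
  assumes "0 < m" and "m * k < n" and "m * s < n"
  shows "theta_word m k (\<lambda>q. if q mod n = m * s then 1 else 0) 0 = (if k = s then 1 else 0)"
proof (cases "k = s")
  case True
  have "(\<Prod>j\<in>gaps m k. (if j mod n = m * s then 1 else 0) + 1) = (1 :: bit)"
    by (rule prod.neutral) (use True assms in \<open>auto simp: mem_gaps\<close>)
  then show ?thesis
    using True assms by (simp add: theta_word_def)
next
  case False
  then have "m * k \<noteq> m * s"
    using assms by auto
  then show ?thesis
    using False assms by (simp add: theta_word_def)
qed

lemma theta_comb_comp_eq_id_iff:
  assumes m: "0 < m" and ndvd: "\<not> m dvd n"
  shows "(\<forall>x\<in>vecs n. theta_comb n m (n div m) c (theta_comb n m (n div m) d x) = x)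
    \<longleftrightarrow> (\<forall>s\<in>{1..n div m}. conv (c(0 := 1)) (d(0 := 1)) s = 0)"
  (is "?id \<longleftrightarrow> ?conv")
proof
  let ?e = "conv (c(0 := 1)) (d(0 := 1))"
  have small: "m * s < n" if "s \<le> n div m" for s
  proof -
    have "m * s \<le> m * (n div m)"
      using that by simp
    also have "\<dots> < n"
      using ndvd by (metis dvd_triv_left le_neq_implies_less times_div_less_eq_dividend)
    finally show ?thesis .
  qed
  show ?conv if ?id
  proof
    fix s
    assume s: "s \<in> {1..n div m}"
    define x :: "nat \<Rightarrow> bit" where "x q = (if q = m * s then 1 else 0)" for q
    have "x \<in> vecs n"
      using small[of s] s by (auto simp: vecs_def x_def)
    have "?e s = (\<Sum>k\<le>n div m. if k = s then ?e k else 0)"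
      using s by simp
    also have "\<dots> = theta_sum m (n div m) ?e (\<lambda>q. x (q mod n)) 0"
      unfolding theta_sum_def x_def
      by (intro sum.cong refl) (use s in \<open>simp add: theta_word_indicator[OF m small small]\<close>)
    also have "\<dots> = theta_comb n m (n div m) c (theta_comb n m (n div m) d x) 0"
      using small[of 0] by (simp add: theta_comb_theta_comb[OF m ndvd])
    also have "\<dots> = x 0"
      using \<open>?id\<close> \<open>x \<in> vecs n\<close> by simp
    also have "\<dots> = 0"
      using m s by (simp add: x_def)
    finally show "?e s = 0" .
  qed
  show ?id if ?conv
  proof
    fix x :: "nat \<Rightarrow> bit"
    assume "x \<in> vecs n"
    have "theta_sum m (n div m) ?e X i = X i" for X i
    proof -
      have "theta_sum m (n div m) ?e X i = (\<Sum>k\<in>{0}. ?e k * theta_word m k X i)"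
        unfolding theta_sum_def by (rule sum.mono_neutral_right) (use \<open>?conv\<close> in auto)
      then show ?thesis
        by (simp add: conv_def)
    qed
    with \<open>x \<in> vecs n\<close> show "theta_comb n m (n div m) c (theta_comb n m (n div m) d x) = x"
      by (auto simp: theta_comb_theta_comb[OF m ndvd] vecs_def)
  qed
qed

theorem proposition1:
  fixes n m :: nat and a b :: "nat \<Rightarrow> bit"
  assumes "n \<ge> 1" and "m \<ge> 2" and "\<not> m dvd n"
    and "b 1 = a 1"
    and "\<And>j. 2 \<le> j \<Longrightarrow> j \<le> n div m \<Longrightarrow>
           b j = a j + (\<Sum>u=1..j-1. a u * b (j - u))"
  shows "(\<forall>x\<in>vecs n. theta_comb n m (n div m) b (theta_comb n m (n div m) a x) = x
              \<and> theta_comb n m (n div m) a (theta_comb n m (n div m) b x) = x)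
    \<and> ((\<forall>x\<in>vecs n. theta_comb n m (n div m) a (theta_comb n m (n div m) a x) = x)
         \<longleftrightarrow> (\<forall>i\<in>{1..(n div m) div 2}. a i = 0))"
proof -
  have m: "0 < m"
    using assms(2) by simp
  note comp_eq_id_iff = theta_comb_comp_eq_id_iff[OF m assms(3)]
  have inverse: "conv (a(0 := 1)) (b(0 := 1)) s = 0" if s: "s \<in> {1..n div m}" for s
  proof -
    have "b s = a s + (\<Sum>u=1..s-1. a u * b (s - u))"
      using assms(4) assms(5)[of s] s by (cases "s = 1") auto
    then show ?thesis
      using s by (simp add: conv_fun_upd_0 add.assoc)
  qed
  then have "\<forall>x\<in>vecs n. theta_comb n m (n div m) b (theta_comb n m (n div m) a x) = x"
    by (simp add: comp_eq_id_iff conv_commute)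
  moreover from inverse have "\<forall>x\<in>vecs n. theta_comb n m (n div m) a (theta_comb n m (n div m) b x) = x"
    by (simp add: comp_eq_id_iff)
  moreover have "(\<forall>x\<in>vecs n. theta_comb n m (n div m) a (theta_comb n m (n div m) a x) = x)
         \<longleftrightarrow> (\<forall>i\<in>{1..(n div m) div 2}. a i = 0)"
    unfolding comp_eq_id_iff by (rule conv_self_fun_upd_0_eq_0_iff)
  ultimately show ?thesis
    by blast
qed

end
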